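(* Let $K$ be an $n$-globular operad equipped with a contraction $\gamma$, and let $X$ be an $n$-globular set. In the free $K$-algebra on $X$, $\mu^K_X\colon K^2X\to KX$, every diagram of constraint $n$-cells commutes: any two parallel constraint $n$-cells of this algebra are equal.
   Context: Fix $n\in\mathbb{N}$. An $n$-globular set $X$ consists of sets $X_0,\dots,X_n$ and functions $s,t\colon X_m\to X_{m-1}$ ($1\le m\le n$) with $s\circ s=s\circ t$ and $t\circ s=t\circ t$; maps commute with $s,t$; $\mathbf{GSet}_n$ is the resulting category. Two $m$-cells are parallel if they have the same source and target. $T$ denotes the free strict $n$-category monad on $\mathbf{GSet}_n$, with unit $\eta^T$ and multiplication $\mu^T$. $1$ denotes the terminal $n$-globular set and $!$ any map to $1$; $T1$ is the free strict $n$-category on $1$; $\mathrm{id}_\alpha$ is the identity cell on $\alpha$. An $n$-globular collection is a map $k\colon K\to T1$ in $\mathbf{GSet}_n$. The tensor $K\otimes K'$ of collections $k\colon K\to T1$, $k'\colon K'\to T1$ is the pullback of $k$ along $T!\colon TK'\to T1$, regarded as a collection via $K\otimes K'\to TK'\xrightarrow{Tk'}T^21\xrightarrow{\mu^T_1}T1$; the unit is $\eta^T_1$. An $n$-globular operad is a monoid $(K,\eta^K,\mu^K)$ in this monoidal category. It induces a monad on $\mathbf{GSet}_n$, also denoted $(K,\eta^K,\mu^K)$: $KA$ is the pullback of $k\colon K\to T1$ and $T!\colon TA\to T1$, so its $m$-cells are pairs $(\tau,c)$ with $\tau\in(TA)_m$, $c\in K_m$, $T!(\tau)=k(c)$; the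 unit and multiplication are induced from those of the operad and of $T$. The free $K$-algebra on $X$ is $\mu^K_X\colon K(KX)\to KX$. Contractions: for $x\in(T1)_m$ put $K(x)=\{a\in K_m: k(a)=x\}$. For $1\le m\le n$ and $\pi\in(T1)_m$ let $C_K(\pi)=K(s\pi)\times K(t\pi)$ if $m=1$, and $C_K(\pi)=\{(a,b)\in K(s\pi)\times K(t\pi): s(a)=s(b),\ t(a)=t(b)\}$ if $m>1$. A contraction $\gamma$ on $K$ consists of, for each $1\le m\le n$ and each $\alpha\in(T1)_{m-1}$, a function $\gamma_{\mathrm{id}_\alpha}\colon C_K(\mathrm{id}_\alpha)\to K(\mathrm{id}_\alpha)$ with $s\gamma_{\mathrm{id}_\alpha}(a,b)=a$ and $t\gamma_{\mathrm{id}_\alpha}(a,b)=b$, such that moreover (tameness) any two parallel $n$-cells $a,b$ of $K$ with $k(a)=k(b)$ are equal. Constraint cells: for a $K$-algebra $\theta\colon KA\to A$ and $1\le m\le n$, an $m$-cell of $A$ is a constraint $m$-cell if it equals $\theta(\mathrm{id}_\pi,\gamma_{\mathrm{id}_{T!(\pi)}}(p,q))$ for some $\pi\in(TA)_{m-1}$ and some $(p,q)\in C_K(\mathrm{id}_{T!(\pi)})$ (note $(\mathrm{id}_\pi,\gamma_{\mathrm{id}_{T!(\pi)}}(p,q))$ is an $m$-cell of $KA$). For the free algebra, $A=KX$ and $\theta=\mu^K_X$. *)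

theory Defs
  imports Main
begin

record 'a gset =
  gcells :: "nat \<Rightarrow> 'a set"
  gsrc :: "nat \<Rightarrow> 'a \<Rightarrow> 'a"   (* gsrc A m : A_m \<rightarrow> A_(m-1) *)
  gtgt :: "nat \<Rightarrow> 'a \<Rightarrow> 'a"

definition is_gset :: "nat \<Rightarrow> 'a gset \<Rightarrow> bool" where
  "is_gset n A \<longleftrightarrow>
     (\<forall>m. n < m \<longrightarrow> gcells A m = {}) \<and>
     (\<forall>m. 1 \<le> m \<and> m \<le> n \<longrightarrow> (\<forall>x\<in>gcells A m.
         gsrc A m x \<in> gcells A (m - 1) \<and> gtgt A m x \<in> gcells A (m - 1))) \<and>
     (\<forall>m. 2 \<le> m \<and> m \<le> n \<longrightarrow> (\<forall>x\<in>gcells A m.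
         gsrc A (m - 1) (gsrc A m x) = gsrc A (m - 1) (gtgt A m x) \<and>
         gtgt A (m - 1) (gsrc A m x) = gtgt A (m - 1) (gtgt A m x)))"

definition is_gmap :: "nat \<Rightarrow> 'a gset \<Rightarrow> 'b gset \<Rightarrow> (nat \<Rightarrow> 'a \<Rightarrow> 'b) \<Rightarrow> bool" where
  "is_gmap n A B f \<longleftrightarrow>
     (\<forall>m\<le>n. \<forall>x\<in>gcells A m. f m x \<in> gcells B m) \<and>
     (\<forall>m. 1 \<le> m \<and> m \<le> n \<longrightarrow> (\<forall>x\<in>gcells A m.
         f (m - 1) (gsrc A m x) = gsrc B m (f m x) \<and> f (m - 1) (gtgt A m x) = gtgt B m (f m x)))"

definition gparallel :: "'a gset \<Rightarrow> nat \<Rightarrow> 'a \<Rightarrow> 'a \<Rightarrow> bool" where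
  "gparallel A m a b \<longleftrightarrow> m = 0 \<or> (gsrc A m a = gsrc A m b \<and> gtgt A m a = gtgt A m b)"

definition unitg :: "nat \<Rightarrow> unit gset" where
  "unitg n = \<lparr>gcells = (\<lambda>m. if m \<le> n then UNIV else {}), gsrc = (\<lambda>_ _. ()), gtgt = (\<lambda>_ _. ())\<rparr>"

definition bang :: "nat \<Rightarrow> 'a \<Rightarrow> unit" where
  "bang d x = ()"

text \<open>Cells of the free strict n-category on a globular set A, in the standard normal
 form T A(x,y) = coproduct over paths x = x0,...,xk = y of the product of the
 T A(x(i-1),x(i)).  An m-cell at depth d (i.e. in the hom globular sets whose
 0-cells are the d-cells of A) is either  Gen a  (m = 0, a a d-cell of A), or
 Seq [x0,...,xk] [c1,...,ck]  (m > 0) with xi d-cells of A and ci (m-1)-cells at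
 depth d+1 lying in the hom from x(i-1) to xi.  Identity cells are represented by
 the same term in all higher dimensions; the dimension is always external.\<close>

datatype 'a tc = Gen 'a | Seq "'a list" "'a tc list"

fun anchor :: "'a tc \<Rightarrow> 'a" where
  "anchor (Gen a) = a"
| "anchor (Seq xs cs) = hd xs"

fun twf :: "'a gset \<Rightarrow> nat \<Rightarrow> nat \<Rightarrow> 'a tc \<Rightarrow> bool" where
  "twf A d 0 c = (\<exists>a. c = Gen a \<and> a \<in> gcells A d)"
| "twf A d (Suc m) c = (case c of Gen a \<Rightarrow> False | Seq xs cs \<Rightarrow>
      xs \<noteq> [] \<and> set xs \<subseteq> gcells A d \<and> length xs = Suc (length cs) \<and>
      (\<forall>i<length cs. twf A (Suc d) m (cs ! i) \<and>
          gsrc A (Suc d) (anchor (cs ! i)) = xs ! i \<and>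
          gtgt A (Suc d) (anchor (cs ! i)) = xs ! Suc i))"

fun tsrc :: "nat \<Rightarrow> 'a tc \<Rightarrow> 'a tc" where
  "tsrc (Suc 0) (Seq xs cs) = Gen (hd xs)"
| "tsrc (Suc (Suc m)) (Seq xs cs) = Seq xs (map (tsrc (Suc m)) cs)"
| "tsrc _ c = c"

fun ttgt :: "nat \<Rightarrow> 'a tc \<Rightarrow> 'a tc" where
  "ttgt (Suc 0) (Seq xs cs) = Gen (last xs)"
| "ttgt (Suc (Suc m)) (Seq xs cs) = Seq xs (map (ttgt (Suc m)) cs)"
| "ttgt _ c = c"

fun tid :: "'a tc \<Rightarrow> 'a tc" where
  "tid (Gen a) = Seq [a] []"
| "tid (Seq xs cs) = Seq xs (map tid cs)"

text \<open>T on maps (f is a dimension-indexed map; generators at depth d are d-cells).\<close>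
fun tmap :: "(nat \<Rightarrow> 'a \<Rightarrow> 'b) \<Rightarrow> nat \<Rightarrow> 'a tc \<Rightarrow> 'b tc" where
  "tmap f d (Gen a) = Gen (f d a)"
| "tmap f d (Seq xs cs) = Seq (map (f d) xs) (map (tmap f (Suc d)) cs)"

fun tcomp :: "nat \<Rightarrow> 'a tc \<Rightarrow> 'a tc \<Rightarrow> 'a tc" where
  "tcomp 0 (Seq xs cs) (Seq ys ds) = Seq (xs @ tl ys) (cs @ ds)"
| "tcomp (Suc j) (Seq xs cs) (Seq ys ds) = Seq xs (map2 (tcomp j) cs ds)"
| "tcomp _ a b = a"

definition tcomps :: "nat \<Rightarrow> 'a tc \<Rightarrow> 'a tc list \<Rightarrow> 'a tc" where
  "tcomps d p cs = (case cs of [] \<Rightarrow> tid p | c # cs' \<Rightarrow> foldl (tcomp d) c cs')"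

text \<open>Multiplication of T (flattening); tmu 0 is mu^T_A : T(TA) \<rightarrow> TA.\<close>
fun tmu :: "nat \<Rightarrow> 'a tc tc \<Rightarrow> 'a tc" where
  "tmu d (Gen p) = p"
| "tmu d (Seq ps cs) = tcomps d (hd ps) (map (tmu (Suc d)) cs)"

fun srcs :: "'a gset \<Rightarrow> nat \<Rightarrow> nat \<Rightarrow> 'a \<Rightarrow> 'a" where
  "srcs A j 0 a = a"
| "srcs A j (Suc r) a = srcs A (j - 1) r (gsrc A j a)"

fun tgts :: "'a gset \<Rightarrow> nat \<Rightarrow> nat \<Rightarrow> 'a \<Rightarrow> 'a" where
  "tgts A j 0 a = a"
| "tgts A j (Suc r) a = tgts A (j - 1) r (gtgt A j a)"

text \<open>Unit of T; teta A 0 m is eta^T_A on m-cells.\<close>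
fun teta :: "'a gset \<Rightarrow> nat \<Rightarrow> nat \<Rightarrow> 'a \<Rightarrow> 'a tc" where
  "teta A d 0 a = Gen a"
| "teta A d (Suc m) a = Seq [srcs A (d + Suc m) (Suc m) a, tgts A (d + Suc m) (Suc m) a]
                           [teta A (Suc d) m a]"

definition Tobj :: "nat \<Rightarrow> 'a gset \<Rightarrow> 'a tc gset" where
  "Tobj n A = \<lparr>gcells = (\<lambda>m. {c. m \<le> n \<and> twf A 0 m c}), gsrc = tsrc, gtgt = ttgt\<rparr>"

abbreviation T1 :: "nat \<Rightarrow> unit tc gset" where
  "T1 n \<equiv> Tobj n (unitg n)"

definition is_collection :: "nat \<Rightarrow> 'k gset \<Rightarrow> (nat \<Rightarrow> 'k \<Rightarrow> unit tc) \<Rightarrow> bool" where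
  "is_collection n K k \<longleftrightarrow> is_gset n K \<and> is_gmap n K (T1 n) k"

text \<open>K \<otimes> K: pullback of k along T! : TK \<rightarrow> T1.\<close>
definition tens :: "nat \<Rightarrow> 'k gset \<Rightarrow> (nat \<Rightarrow> 'k \<Rightarrow> unit tc) \<Rightarrow> ('k \<times> 'k tc) gset" where
  "tens n K k = \<lparr>gcells = (\<lambda>m. {(c, \<rho>). c \<in> gcells K m \<and> \<rho> \<in> gcells (Tobj n K) m \<and>
                                   k m c = tmap bang 0 \<rho>}),
                 gsrc = (\<lambda>m (c, \<rho>). (gsrc K m c, tsrc m \<rho>)),
                 gtgt = (\<lambda>m (c, \<rho>). (gtgt K m c, ttgt m \<rho>))\<rparr>"

definition tens_map :: "(nat \<Rightarrow> 'k \<Rightarrow> unit tc) \<Rightarrow> nat \<Rightarrow> 'k \<times> 'k tc \<Rightarrow> unit tc" where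
  "tens_map k m x = tmu 0 (tmap k 0 (snd x))"

text \<open>An n-globular operad: a monoid (K, e, mu) in collections; e m is the unit m-cell
 (the map 1 \<rightarrow> K), mu : K \<otimes> K \<rightarrow> K.  The associativity law is stated through the
 canonical isomorphism (K\<otimes>K)\<otimes>K \<cong> K\<otimes>(K\<otimes>K), which sends ((c,\<rho>),\<sigma>) to (c,\<tau>),
 where \<tau> \<in> T(K\<otimes>K) \<cong> TK \<times>_{T^21} T^2K corresponds to (\<rho>,\<sigma>') with \<sigma>' the unique
 cell of T^2K with mu^T \<sigma>' = \<sigma> and T(T!) \<sigma>' = Tk \<rho>.\<close>
definition is_operad :: "nat \<Rightarrow> 'k gset \<Rightarrow> (nat \<Rightarrow> 'k \<Rightarrow> unit tc) \<Rightarrow> (nat \<Rightarrow> 'k)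
                          \<Rightarrow> (nat \<Rightarrow> 'k \<times> 'k tc \<Rightarrow> 'k) \<Rightarrow> bool" where
  "is_operad n K k e mu \<longleftrightarrow>
     is_collection n K k \<and>
     is_gmap n (unitg n) K (\<lambda>m _. e m) \<and>
     (\<forall>m\<le>n. k m (e m) = teta (unitg n) 0 m ()) \<and>
     is_gmap n (tens n K k) K mu \<and>
     (\<forall>m\<le>n. \<forall>x\<in>gcells (tens n K k) m. k m (mu m x) = tens_map k m x) \<and>
     (\<forall>m\<le>n. \<forall>c\<in>gcells K m. mu m (e m, teta K 0 m c) = c) \<and>
     (\<forall>m\<le>n. \<forall>c\<in>gcells K m. mu m (c, tmap (\<lambda>d _. e d) 0 (k m c)) = c) \<and>
     (\<forall>m\<le>n. \<forall>c \<rho> \<sigma> \<sigma>' \<tau>.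
        (c, \<rho>) \<in> gcells (tens n K k) m \<longrightarrow>
        \<sigma> \<in> gcells (Tobj n K) m \<longrightarrow>
        tmap bang 0 \<sigma> = tmu 0 (tmap k 0 \<rho>) \<longrightarrow>
        \<sigma>' \<in> gcells (Tobj n (Tobj n K)) m \<longrightarrow>
        tmu 0 \<sigma>' = \<sigma> \<longrightarrow>
        tmap (\<lambda>d x. tmap bang 0 x) 0 \<sigma>' = tmap k 0 \<rho> \<longrightarrow>
        \<tau> \<in> gcells (Tobj n (tens n K k)) m \<longrightarrow>
        tmap (\<lambda>d. fst) 0 \<tau> = \<rho> \<longrightarrow>
        tmap (\<lambda>d. snd) 0 \<tau> = \<sigma>' \<longrightarrow>
        mu m (mu m (c, \<rho>), \<sigma>) = mu m (c, tmap mu 0 \<tau>))"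

definition fib :: "'k gset \<Rightarrow> (nat \<Rightarrow> 'k \<Rightarrow> unit tc) \<Rightarrow> nat \<Rightarrow> unit tc \<Rightarrow> 'k set" where
  "fib K k m x = {a \<in> gcells K m. k m a = x}"

definition CK :: "'k gset \<Rightarrow> (nat \<Rightarrow> 'k \<Rightarrow> unit tc) \<Rightarrow> nat \<Rightarrow> unit tc \<Rightarrow> ('k \<times> 'k) set" where
  "CK K k m \<pi> = (if m = 1 then fib K k 0 (tsrc 1 \<pi>) \<times> fib K k 0 (ttgt 1 \<pi>)
     else {(a, b). a \<in> fib K k (m - 1) (tsrc m \<pi>) \<and> b \<in> fib K k (m - 1) (ttgt m \<pi>) \<and>
                   gsrc K (m - 1) a = gsrc K (m - 1) b \<and> gtgt K (m - 1) a = gtgt K (m - 1) b})"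

text \<open>gamma m \<alpha> is gamma_{id_\<alpha>} for \<alpha> an (m-1)-cell of T1.\<close>
definition is_contraction :: "nat \<Rightarrow> 'k gset \<Rightarrow> (nat \<Rightarrow> 'k \<Rightarrow> unit tc)
                               \<Rightarrow> (nat \<Rightarrow> unit tc \<Rightarrow> 'k \<Rightarrow> 'k \<Rightarrow> 'k) \<Rightarrow> bool" where
  "is_contraction n K k gamma \<longleftrightarrow>
     (\<forall>m. 1 \<le> m \<and> m \<le> n \<longrightarrow> (\<forall>\<alpha>\<in>gcells (T1 n) (m - 1). \<forall>(a, b)\<in>CK K k m (tid \<alpha>).
         gamma m \<alpha> a b \<in> fib K k m (tid \<alpha>) \<and>
         gsrc K m (gamma m \<alpha> a b) = a \<and> gtgt K m (gamma m \<alpha> a b) = b)) \<and>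
     (\<forall>a\<in>gcells K n. \<forall>b\<in>gcells K n. gparallel K n a b \<and> k n a = k n b \<longrightarrow> a = b)"

text \<open>KX: pullback of k and T! : TX \<rightarrow> T1.\<close>
definition Kobj :: "nat \<Rightarrow> 'k gset \<Rightarrow> (nat \<Rightarrow> 'k \<Rightarrow> unit tc) \<Rightarrow> 'x gset \<Rightarrow> ('x tc \<times> 'k) gset" where
  "Kobj n K k X = \<lparr>gcells = (\<lambda>m. {(\<tau>, c). \<tau> \<in> gcells (Tobj n X) m \<and> c \<in> gcells K m \<and>
                                       tmap bang 0 \<tau> = k m c}),
                   gsrc = (\<lambda>m (\<tau>, c). (tsrc m \<tau>, gsrc K m c)),
                   gtgt = (\<lambda>m (\<tau>, c). (ttgt m \<tau>, gtgt K m c))\<rparr>"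

definition muK :: "(nat \<Rightarrow> 'k \<times> 'k tc \<Rightarrow> 'k) \<Rightarrow> nat \<Rightarrow> ('x tc \<times> 'k) tc \<times> 'k \<Rightarrow> 'x tc \<times> 'k" where
  "muK mu m y = (tmu 0 (tmap (\<lambda>d. fst) 0 (fst y)), mu m (snd y, tmap (\<lambda>d. snd) 0 (fst y)))"

definition constraint_cell :: "nat \<Rightarrow> 'k gset \<Rightarrow> (nat \<Rightarrow> 'k \<Rightarrow> unit tc) \<Rightarrow> (nat \<Rightarrow> 'k \<times> 'k tc \<Rightarrow> 'k)
     \<Rightarrow> (nat \<Rightarrow> unit tc \<Rightarrow> 'k \<Rightarrow> 'k \<Rightarrow> 'k) \<Rightarrow> 'x gset \<Rightarrow> nat \<Rightarrow> 'x tc \<times> 'k \<Rightarrow> bool" where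
  "constraint_cell n K k mu gamma X m x \<longleftrightarrow> 1 \<le> m \<and> m \<le> n \<and>
     (\<exists>\<pi> p q. \<pi> \<in> gcells (Tobj n (Kobj n K k X)) (m - 1) \<and>
              (p, q) \<in> CK K k m (tid (tmap bang 0 \<pi>)) \<and>
              x = muK mu m (tid \<pi>, gamma m (tmap bang 0 \<pi>) p q))"

end

theory Submission
  imports Defs
begin

(* A constraint m-cell is muK applied to a cell (id_pi, gamma(p,q)) of K(KX).  Two facts
   about such a cell carry the proof:
   (1) its T X-component is mu^T applied to an identity, hence is itself an identity
       cell id_u on an (m-1)-cell u of T X (mu^T preserves identities);
   (2) its K-component is an m-cell of K lying over T!(id_u), since muK maps K(KX) into
       the pullback KX (mu^T is natural, and the operad multiplication lies over mu^T).
   For two parallel constraint n-cells the sources of id_u and id_u' agree, so u = u';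
   then the K-components are parallel n-cells of K with the same image in T1, and
   tameness of the contraction identifies them. *)

lemma tmap_const: "tmap (\<lambda>_. g) d t = map_tc g t"
  by (induction t arbitrary: d) auto

lemma tmap_bang: "tmap bang d t = map_tc (\<lambda>_. ()) t"
  by (induction t arbitrary: d) (auto simp: bang_def)

lemma tmap_tmap: "tmap f d (tmap g d t) = tmap (\<lambda>j x. f j (g j x)) d t"
  by (induction t arbitrary: d) auto

lemma tmap_cong_twf:
  assumes "twf A d m t" and "\<forall>j x. x \<in> gcells A j \<longrightarrow> f j x = g j x"
  shows "tmap f d t = tmap g d t"
  using assms
proof (induction m arbitrary: d t)
  case 0 then show ?case by auto
next
  case (Suc m)
  then obtain xs cs where t: "t = Seq xs cs" by (cases t) auto
  have "map (f d) xs = map (g d) xs" using Suc.prems t by (auto intro!: map_cong)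
  moreover have "map (tmap f (Suc d)) cs = map (tmap g (Suc d)) cs"
  proof (rule map_cong[OF refl])
    fix c assume "c \<in> set cs"
    then obtain i where "i < length cs" "c = cs ! i" by (auto simp: in_set_conv_nth)
    then show "tmap f (Suc d) c = tmap g (Suc d) c" using Suc t by auto
  qed
  ultimately show ?case using t by simp
qed

lemma tid_map: "map_tc g (tid c) = tid (map_tc g c)"
  by (induction c) auto

lemma tid_tid: "tid (tid c) = tid c"
  by (induction c) auto

lemma anchor_tid: "anchor (tid c) = anchor c"
  by (cases c) auto

lemma twf_anchor: "twf A d m c \<Longrightarrow> anchor c \<in> gcells A d"
  by (cases m; cases c) auto

lemma anchor_tmap: "twf A d m c \<Longrightarrow> anchor (tmap f d c) = f d (anchor c)"
  by (cases m; cases c) (auto simp: hd_map)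

lemma twf_tid: "twf A d m c \<Longrightarrow> twf A d (Suc m) (tid c)"
proof (induction m arbitrary: d c)
  case 0 then show ?case by auto
next
  case (Suc m)
  then obtain xs cs where c: "c = Seq xs cs" by (cases c) auto
  show ?case using Suc c by (auto simp: anchor_tid)
qed

lemma twf_tmap:
  assumes "twf A d m c"
    and cells: "\<forall>j x. x \<in> gcells A j \<longrightarrow> d \<le> j \<longrightarrow> j \<le> d + m \<longrightarrow> f j x \<in> gcells B j"
    and bdry: "\<forall>j x. x \<in> gcells A (Suc j) \<longrightarrow>
                 gsrc B (Suc j) (f (Suc j) x) = f j (gsrc A (Suc j) x) \<and>
                 gtgt B (Suc j) (f (Suc j) x) = f j (gtgt A (Suc j) x)"
  shows "twf B d m (tmap f d c)"
  using assms(1) cells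
proof (induction m arbitrary: d c)
  case 0 then show ?case by auto
next
  case (Suc m)
  then obtain xs cs where c: "c = Seq xs cs" by (cases c) auto
  have xs: "xs \<noteq> []" "set xs \<subseteq> gcells A d" "length xs = Suc (length cs)"
    using Suc.prems c by auto
  have ch: "\<forall>i<length cs. twf A (Suc d) m (cs ! i) \<and>
          gsrc A (Suc d) (anchor (cs ! i)) = xs ! i \<and>
          gtgt A (Suc d) (anchor (cs ! i)) = xs ! Suc i" using Suc.prems c by auto
  have "set (map (f d) xs) \<subseteq> gcells B d" using xs Suc.prems(2) by auto
  moreover have "\<forall>i<length cs. twf B (Suc d) m (tmap f (Suc d) (cs ! i)) \<and>
          gsrc B (Suc d) (anchor (tmap f (Suc d) (cs ! i))) = map (f d) xs ! i \<and>
          gtgt B (Suc d) (anchor (tmap f (Suc d) (cs ! i))) = map (f d) xs ! Suc i"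
  proof (intro allI impI conjI)
    fix i assume i: "i < length cs"
    show "twf B (Suc d) m (tmap f (Suc d) (cs ! i))"
      using Suc.IH[of "Suc d" "cs ! i"] ch i Suc.prems(2) by auto
    have an: "anchor (cs ! i) \<in> gcells A (Suc d)" using twf_anchor ch i by blast
    show "gsrc B (Suc d) (anchor (tmap f (Suc d) (cs ! i))) = map (f d) xs ! i"
      using anchor_tmap[of A "Suc d" m "cs ! i" f] ch i an bdry xs by auto
    show "gtgt B (Suc d) (anchor (tmap f (Suc d) (cs ! i))) = map (f d) xs ! Suc i"
      using anchor_tmap[of A "Suc d" m "cs ! i" f] ch i an bdry xs by auto
  qed
  ultimately show ?case using c xs by simp
qed

text \<open>The bare shape of an m-cell: m nested levels of sequences ending in generators.
 Composition in dimension j < m and identities behave well on cells of this shape.\<close>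
fun shaped :: "nat \<Rightarrow> 'a tc \<Rightarrow> bool" where
  "shaped 0 c = (\<exists>a. c = Gen a)"
| "shaped (Suc m) (Gen a) = False"
| "shaped (Suc m) (Seq xs cs) = (\<forall>c\<in>set cs. shaped m c)"

lemma twf_shaped: "twf A d m c \<Longrightarrow> shaped m c"
proof (induction m arbitrary: d c)
  case 0 then show ?case by auto
next
  case (Suc m)
  then obtain xs cs where c: "c = Seq xs cs" by (cases c) auto
  show ?case using Suc c by (fastforce simp: in_set_conv_nth)
qed

lemma shaped_tid: "shaped m c \<Longrightarrow> m < k \<Longrightarrow> shaped k (tid c)"
proof (induction m arbitrary: c k)
  case 0 then show ?case by (cases k) auto
next
  case (Suc m)
  then obtain xs cs where c: "c = Seq xs cs" by (cases c) auto
  obtain k' where k: "k = Suc k'" using Suc by (cases k) auto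
  show ?case using Suc c k by auto
qed

lemma tcomp_shaped_tid:
  assumes "shaped k a" "shaped k b" "j < k"
  shows "shaped k (tcomp j a b) \<and> tcomp j (tid a) (tid b) = tid (tcomp j a b)"
  using assms
proof (induction j arbitrary: a b k)
  case 0
  obtain k' where k: "k = Suc k'" using 0 by (cases k) auto
  obtain xs cs where a: "a = Seq xs cs" using 0 k by (cases a) auto
  obtain ys ds where b: "b = Seq ys ds" using 0 k by (cases b) auto
  show ?case using 0 a b k by auto
next
  case (Suc j)
  obtain k' where k: "k = Suc k'" using Suc by (cases k) auto
  obtain xs cs where a: "a = Seq xs cs" using Suc k by (cases a) auto
  obtain ys ds where b: "b = Seq ys ds" using Suc k by (cases b) auto
  have IH: "shaped k' (tcomp j c d) \<and> tcomp j (tid c) (tid d) = tid (tcomp j c d)"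
    if cd: "(c, d) \<in> set (zip cs ds)" for c d
  proof -
    have "shaped k' c" "shaped k' d"
      using Suc.prems a b k set_zip_leftD[OF cd] set_zip_rightD[OF cd] by auto
    then show ?thesis using Suc.IH Suc.prems(3) k by simp
  qed
  show ?case using a b k IH by (auto simp: zip_map_map intro!: map_cong)
qed

lemma foldl_tcomp_shaped_tid:
  assumes "shaped k a" "\<forall>b\<in>set bs. shaped k b" "j < k"
  shows "shaped k (foldl (tcomp j) a bs) \<and>
         foldl (tcomp j) (tid a) (map tid bs) = tid (foldl (tcomp j) a bs)"
  using assms
proof (induction bs arbitrary: a)
  case Nil then show ?case by simp
next
  case (Cons b bs)
  then show ?case using tcomp_shaped_tid[of k a b j] Cons.IH[of "tcomp j a b"] by simp
qed

lemma tmu_shaped: "twf (Tobj n X) d m \<sigma> \<Longrightarrow> shaped (d + m) (tmu d \<sigma>)"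
proof (induction m arbitrary: d \<sigma>)
  case 0 then show ?case by (auto simp: Tobj_def dest: twf_shaped)
next
  case (Suc m)
  then obtain ps cs where s: "\<sigma> = Seq ps cs" by (cases \<sigma>) auto
  have "hd ps \<in> gcells (Tobj n X) d" using Suc.prems s by (auto dest!: hd_in_set)
  then have hd: "shaped d (hd ps)" by (auto simp: Tobj_def dest: twf_shaped)
  have ch: "\<forall>w\<in>set (map (tmu (Suc d)) cs). shaped (d + Suc m) w"
    using Suc s by (fastforce simp: in_set_conv_nth)
  show ?case
  proof (cases cs)
    case Nil then show ?thesis using s shaped_tid[OF hd, of "d + Suc m"] by (simp add: tcomps_def)
  next
    case (Cons c cs')
    then show ?thesis
      using s ch foldl_tcomp_shaped_tid[of "d + Suc m" "tmu (Suc d) c" "map (tmu (Suc d)) cs'" d]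
      by (simp add: tcomps_def)
  qed
qed

lemma tmu_tid: "twf (Tobj n X) d m \<sigma> \<Longrightarrow> tmu d (tid \<sigma>) = tid (tmu d \<sigma>)"
proof (induction m arbitrary: d \<sigma>)
  case 0 then show ?case by (auto simp: tcomps_def)
next
  case (Suc m)
  then obtain ps cs where s: "\<sigma> = Seq ps cs" by (cases \<sigma>) auto
  have e: "map (tmu (Suc d) \<circ> tid) cs = map (tid \<circ> tmu (Suc d)) cs"
    using Suc s by (auto simp: in_set_conv_nth intro!: map_cong)
  have ch: "\<forall>w\<in>set (map (tmu (Suc d)) cs). shaped (Suc d + m) w"
    using Suc s tmu_shaped[of n X "Suc d" m] by (auto simp: in_set_conv_nth)
  show ?case
  proof (cases cs)
    case Nil then show ?thesis using s by (simp add: tcomps_def tid_tid)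
  next
    case (Cons c cs')
    then show ?thesis
      using s e ch foldl_tcomp_shaped_tid[of "Suc d + m" "tmu (Suc d) c" "map (tmu (Suc d)) cs'" d]
      by (simp add: tcomps_def o_def cong: map_cong)
  qed
qed

lemma tsrc_tid: "shaped m u \<Longrightarrow> tsrc (Suc m) (tid u) = u"
proof (induction m arbitrary: u)
  case 0 then show ?case by auto
next
  case (Suc m)
  then obtain xs cs where u: "u = Seq xs cs" by (cases u) auto
  show ?case using Suc u by (auto intro: map_idI)
qed

lemma tcomp_map: "tcomp j (map_tc g a) (map_tc g b) = map_tc g (tcomp j a b)"
  by (induction j a b rule: tcomp.induct) (auto simp: zip_map_map map_tl intro!: map_cong)

lemma foldl_tcomp_map:
  "foldl (tcomp j) (map_tc g a) (map (map_tc g) bs) = map_tc g (foldl (tcomp j) a bs)"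
  by (induction bs arbitrary: a) (auto simp: tcomp_map)

lemma tmu_map: "twf A d m \<sigma> \<Longrightarrow> tmu d (map_tc (map_tc g) \<sigma>) = map_tc g (tmu d \<sigma>)"
proof (induction m arbitrary: d \<sigma>)
  case 0 then show ?case by auto
next
  case (Suc m)
  then obtain ps cs where s: "\<sigma> = Seq ps cs" by (cases \<sigma>) auto
  have ps: "ps \<noteq> []" using Suc s by auto
  have e: "map (tmu (Suc d)) (map (map_tc (map_tc g)) cs) = map (map_tc g) (map (tmu (Suc d)) cs)"
    using Suc s by (auto simp: in_set_conv_nth intro!: map_cong)
  show ?case using s ps e
    by (cases "map (tmu (Suc d)) cs") (auto simp: tcomps_def hd_map tid_map foldl_tcomp_map)
qed

lemma twf_map_fst: "twf (Kobj n K k X) d m \<sigma> \<Longrightarrow> twf (Tobj n X) d m (map_tc fst \<sigma>)"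
  using twf_tmap[of "Kobj n K k X" d m \<sigma> "\<lambda>_. fst" "Tobj n X"]
  by (auto simp: tmap_const Kobj_def Tobj_def split: prod.split)

lemma twf_map_snd: "twf (Kobj n K k X) d m \<sigma> \<Longrightarrow> twf K d m (map_tc snd \<sigma>)"
  using twf_tmap[of "Kobj n K k X" d m \<sigma> "\<lambda>_. snd" K]
  by (auto simp: tmap_const Kobj_def split: prod.split)

text \<open>Fact (2): the K-component of muK lies in K over T! of its TX-component, i.e. muK
 lands in the pullback KX.  This uses that mu lies over mu^T and that mu^T is natural.\<close>
lemma muK_snd_fibre:
  assumes op: "is_operad n K k e mu"
    and cell: "(\<sigma>, c) \<in> gcells (Kobj n K k (Kobj n K k X)) m"
  shows "snd (muK mu m (\<sigma>, c)) \<in> gcells K m \<and>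
         k m (snd (muK mu m (\<sigma>, c))) = tmap bang 0 (fst (muK mu m (\<sigma>, c)))"
proof -
  let ?KX = "Kobj n K k X"
  have m: "m \<le> n" and tw: "twf ?KX 0 m \<sigma>" and c: "c \<in> gcells K m"
    and over: "tmap bang 0 \<sigma> = k m c"
    using cell by (auto simp: Kobj_def Tobj_def)
  define \<rho> where "\<rho> = map_tc snd \<sigma>"
  have "tmap bang 0 \<rho> = k m c"
    using over by (simp add: \<rho>_def tmap_bang tc.map_comp o_def)
  then have tens: "(c, \<rho>) \<in> gcells (tens n K k) m"
    using c m twf_map_snd[OF tw] by (simp add: tens_def Tobj_def \<rho>_def)
  have mu_cell: "mu m (c, \<rho>) \<in> gcells K m"
    and mu_over: "k m (mu m (c, \<rho>)) = tmu 0 (tmap k 0 \<rho>)"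
    using op tens m unfolding is_operad_def is_gmap_def tens_map_def by auto
  have "tmap k 0 \<rho> = tmap (\<lambda>j x. k j (snd x)) 0 \<sigma>"
    using tmap_tmap[of k 0 "\<lambda>_. snd" \<sigma>] by (simp add: \<rho>_def tmap_const)
  also have "\<dots> = tmap (\<lambda>j x. map_tc (\<lambda>_. ()) (fst x)) 0 \<sigma>"
    by (rule tmap_cong_twf[OF tw]) (auto simp: Kobj_def tmap_bang)
  also have "\<dots> = map_tc (map_tc (\<lambda>_. ())) (map_tc fst \<sigma>)"
    using tmap_tmap[of "\<lambda>_. map_tc (\<lambda>_. ())" 0 "\<lambda>_. fst" \<sigma>] by (simp add: tmap_const)
  finally have "tmu 0 (tmap k 0 \<rho>) = map_tc (\<lambda>_. ()) (tmu 0 (map_tc fst \<sigma>))"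
    using tmu_map[OF twf_map_fst[OF tw]] by simp
  then show ?thesis
    using mu_cell mu_over by (simp add: muK_def tmap_const tmap_bang \<rho>_def)
qed

lemma constraint_pair_cell:
  assumes con: "is_contraction n K k gamma" and m: "1 \<le> m" "m \<le> n"
    and pi: "\<pi> \<in> gcells (Tobj n (Kobj n K k X)) (m - 1)"
    and pq: "(p, q) \<in> CK K k m (tid (tmap bang 0 \<pi>))"
  shows "(tid \<pi>, gamma m (tmap bang 0 \<pi>) p q) \<in> gcells (Kobj n K k (Kobj n K k X)) m"
proof -
  let ?\<alpha> = "tmap bang 0 \<pi>"
  have tw: "twf (Kobj n K k X) 0 (m - 1) \<pi>" using pi by (simp add: Tobj_def)
  have "twf (unitg n) 0 (m - 1) ?\<alpha>"
    by (rule twf_tmap[OF tw]) (use m in \<open>auto simp: unitg_def\<close>)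
  then have "?\<alpha> \<in> gcells (T1 n) (m - 1)" using m by (simp add: Tobj_def)
  then have "gamma m ?\<alpha> p q \<in> fib K k m (tid ?\<alpha>)"
    using con m pq unfolding is_contraction_def by fastforce
  moreover have "twf (Kobj n K k X) 0 m (tid \<pi>)" using twf_tid[OF tw] m by simp
  moreover have "tmap bang 0 (tid \<pi>) = tid ?\<alpha>" by (simp add: tmap_bang tid_map)
  ultimately show ?thesis using m by (simp add: Kobj_def Tobj_def fib_def)
qed

lemma constraint_cell_shape:
  assumes op: "is_operad n K k e mu" and con: "is_contraction n K k gamma"
    and x: "constraint_cell n K k mu gamma X m x"
  obtains u where "shaped (m - 1) u" "fst x = tid u"
    "snd x \<in> gcells K m" "k m (snd x) = tmap bang 0 (fst x)"
proof -
  obtain \<pi> p q where m: "1 \<le> m" "m \<le> n"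
    and pi: "\<pi> \<in> gcells (Tobj n (Kobj n K k X)) (m - 1)"
    and pq: "(p, q) \<in> CK K k m (tid (tmap bang 0 \<pi>))"
    and x_def: "x = muK mu m (tid \<pi>, gamma m (tmap bang 0 \<pi>) p q)"
    using x unfolding constraint_cell_def by blast
  have tw: "twf (Tobj n X) 0 (m - 1) (map_tc fst \<pi>)"
    using pi twf_map_fst by (auto simp: Tobj_def)
  have "fst x = tid (tmu 0 (map_tc fst \<pi>))"
    using tmu_tid[OF tw] by (simp add: x_def muK_def tmap_const tid_map)
  moreover have "shaped (m - 1) (tmu 0 (map_tc fst \<pi>))" using tmu_shaped[OF tw] by simp
  moreover note muK_snd_fibre[OF op constraint_pair_cell[OF con m pi pq], folded x_def]
  ultimately show thesis using that by blast
qed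

theorem mainTheorem11:
  fixes n :: nat and K :: "'k gset" and k :: "nat \<Rightarrow> 'k \<Rightarrow> unit tc"
    and e :: "nat \<Rightarrow> 'k" and mu :: "nat \<Rightarrow> 'k \<times> 'k tc \<Rightarrow> 'k"
    and gamma :: "nat \<Rightarrow> unit tc \<Rightarrow> 'k \<Rightarrow> 'k \<Rightarrow> 'k"
    and X :: "'x gset" and x y :: "'x tc \<times> 'k"
  assumes "is_operad n K k e mu"
    and "is_contraction n K k gamma"
    and "is_gset n X"
    and "constraint_cell n K k mu gamma X n x"
    and "constraint_cell n K k mu gamma X n y"
    and "gparallel (Kobj n K k X) n x y"
  shows "x = y"
proof -
  have n: "Suc (n - 1) = n" using assms(4) unfolding constraint_cell_def by auto
  obtain u where u: "shaped (n - 1) u" "fst x = tid u"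
    and x_cell: "snd x \<in> gcells K n" "k n (snd x) = tmap bang 0 (fst x)"
    using constraint_cell_shape[OF assms(1,2,4)] .
  obtain v where v: "shaped (n - 1) v" "fst y = tid v"
    and y_cell: "snd y \<in> gcells K n" "k n (snd y) = tmap bang 0 (fst y)"
    using constraint_cell_shape[OF assms(1,2,5)] .
  have par: "tsrc n (fst x) = tsrc n (fst y)" "gparallel K n (snd x) (snd y)"
    using assms(6) n by (auto simp: gparallel_def Kobj_def split: prod.splits)
  have "u = v" using par(1) tsrc_tid[OF u(1)] tsrc_tid[OF v(1)] u(2) v(2) n by simp
  then have "fst x = fst y" using u v by simp
  moreover have "snd x = snd y"
    using assms(2) par(2) x_cell y_cell \<open>fst x = fst y\<close> unfolding is_contraction_def by metis
  ultimately show ?thesis by (simp add: prod_eq_iff)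
qed

end
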